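(* Let $\mathcal K$ be an abstract Krivine structure. For all $a,b\in\mathcal P_\perp(\Pi)$, $$\overline{a\circ_\bullet b}=\overline{\bigcup\{c\in\mathcal P_\perp(\Pi): b\to_\perp c\subseteq a\}},$$ i.e. $\overline{a\circ_\bullet b}=a\,\sharp\,b$, where $a\,\sharp\,b$ is the infimum of $\{c\in\mathcal P_\perp(\Pi): a\le b\to_\perp c\}$ in $\mathcal P_\perp(\Pi)$ ordered by $a\le b\iff a\supseteq b$.
   Context: An abstract Krivine structure $\mathcal K$ consists of sets $\Lambda,\Pi$, a relation $\perp\subseteq\Lambda\times\Pi$, a map $\mathrm{push}$ written $t\cdot\pi$ (associating to the right), an application $ts$ on $\Lambda$, a subset $\mathrm{QP}\subseteq\Lambda$ closed under application, and $\mathsf K,\mathsf S\in\mathrm{QP}$ with: $t\perp s\cdot\pi\Rightarrow ts\perp\pi$; $t\perp\pi\Rightarrow\mathsf K\perp t\cdot s\cdot\pi$; $tu(su)\perp\pi\Rightarrow\mathsf S\perp t\cdot s\cdot u\cdot\pi$. Polars: $L^\perp=\{\pi:\forall t\in L,\ t\perp\pi\}$, ${}^\perp P=\{t:\forall\pi\in P,\ t\perp\pi\}$; $\overline P=({}^\perp P)^\perp$; $\mathcal P_\perp(\Pi)=\{P:\overline P=P\}$. For $P,Q\subseteq\Pi$: $P\to_\perp Q=\overline{\{t\cdot\pi:t\in{}^\perp P,\pi\in Q\}}$ and $P\circ_\bullet Q=\{\pi\in\Pi: t\cdot\pi'\in P\ \forall t\in{}^\perp Q,\ \pi'\in\overline{\{\pi\}}\}$.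 *)

theory Defs
  imports Main
begin

text \<open>Abstract Krivine structure: terms of type 'l, stacks of type 'p.\<close>

locale AKS =
  fixes perp :: "'l \<Rightarrow> 'p \<Rightarrow> bool"
    and push :: "'l \<Rightarrow> 'p \<Rightarrow> 'p"
    and app :: "'l \<Rightarrow> 'l \<Rightarrow> 'l"
    and QP :: "'l set"
    and K :: 'l
    and S :: 'l
  assumes QP_app: "\<And>t s. t \<in> QP \<Longrightarrow> s \<in> QP \<Longrightarrow> app t s \<in> QP"
    and K_QP: "K \<in> QP"
    and S_QP: "S \<in> QP"
    and push_rule: "\<And>t s \<pi>. perp t (push s \<pi>) \<Longrightarrow> perp (app t s) \<pi>"
    and K_rule: "\<And>t s \<pi>. perp t \<pi> \<Longrightarrow> perp K (push t (push s \<pi>))"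
    and S_rule: "\<And>t s u \<pi>. perp (app (app t u) (app s u)) \<pi> \<Longrightarrow>
                    perp S (push t (push s (push u \<pi>)))"

definition polarL :: "('l \<Rightarrow> 'p \<Rightarrow> bool) \<Rightarrow> 'l set \<Rightarrow> 'p set" where
  "polarL perp L = {\<pi>. \<forall>t\<in>L. perp t \<pi>}"

definition polarP :: "('l \<Rightarrow> 'p \<Rightarrow> bool) \<Rightarrow> 'p set \<Rightarrow> 'l set" where
  "polarP perp P = {t. \<forall>\<pi>\<in>P. perp t \<pi>}"

definition bclos :: "('l \<Rightarrow> 'p \<Rightarrow> bool) \<Rightarrow> 'p set \<Rightarrow> 'p set" where
  "bclos perp P = polarL perp (polarP perp P)"

definition closedP :: "('l \<Rightarrow> 'p \<Rightarrow> bool) \<Rightarrow> 'p set set" where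
  "closedP perp = {P. bclos perp P = P}"

definition arrowP :: "('l \<Rightarrow> 'p \<Rightarrow> bool) \<Rightarrow> ('l \<Rightarrow> 'p \<Rightarrow> 'p) \<Rightarrow> 'p set \<Rightarrow> 'p set \<Rightarrow> 'p set" where
  "arrowP perp push P Q = bclos perp {push t \<pi> | t \<pi>. t \<in> polarP perp P \<and> \<pi> \<in> Q}"

definition circP :: "('l \<Rightarrow> 'p \<Rightarrow> bool) \<Rightarrow> ('l \<Rightarrow> 'p \<Rightarrow> 'p) \<Rightarrow> 'p set \<Rightarrow> 'p set \<Rightarrow> 'p set" where
  "circP perp push P Q = {\<pi>. \<forall>t \<in> polarP perp Q. \<forall>\<pi>' \<in> bclos perp {\<pi>}. push t \<pi>' \<in> P}"

end

theory Submission
  imports Defs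
begin

text \<open>A stack \<pi> belongs to a \<circ> b exactly when b \<rightarrow> c \<subseteq> a for the least closed set c
  containing \<pi>, namely the closure of {\<pi>}. As a is closed, b \<rightarrow> c \<subseteq> a only asks that every
  stack of c, under every term of the polar of b, lands in a; since this condition is monotone in c,
  it is the same as \<pi> lying in some closed c with b \<rightarrow> c \<subseteq> a. So the two sets agree already
  before taking closures, for closed a and arbitrary b.\<close>

lemma bclos_increasing: "X \<subseteq> bclos perp X"
  by (auto simp: bclos_def polarL_def polarP_def)

lemma bclos_mono: "X \<subseteq> Y \<Longrightarrow> bclos perp X \<subseteq> bclos perp Y"
  by (auto simp: bclos_def polarL_def polarP_def)

lemma bclos_in_closedP: "bclos perp X \<in> closedP perp"
  by (auto simp: closedP_def bclos_def polarL_def polarP_def)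

lemma bclos_least: "X \<subseteq> c \<Longrightarrow> c \<in> closedP perp \<Longrightarrow> bclos perp X \<subseteq> c"
  using bclos_mono[of X c perp] by (auto simp: closedP_def)

lemma arrowP_subset_closed_iff:
  assumes "a \<in> closedP perp"
  shows "arrowP perp push b c \<subseteq> a \<longleftrightarrow> (\<forall>t \<in> polarP perp b. \<forall>\<pi> \<in> c. push t \<pi> \<in> a)"
proof -
  let ?pushes = "{push t \<pi> | t \<pi>. t \<in> polarP perp b \<and> \<pi> \<in> c}"
  have "bclos perp ?pushes \<subseteq> a \<longleftrightarrow> ?pushes \<subseteq> a"
    using subset_trans[OF bclos_increasing] bclos_least[OF _ assms] by (rule iffI)
  also have "\<dots> \<longleftrightarrow> (\<forall>t \<in> polarP perp b. \<forall>\<pi> \<in> c. push t \<pi> \<in> a)"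
    by auto
  finally show ?thesis
    unfolding arrowP_def .
qed

lemma circP_eq_Union_closedP:
  assumes "a \<in> closedP perp"
  shows "circP perp push a b = \<Union>{c \<in> closedP perp. arrowP perp push b c \<subseteq> a}"
proof
  show "circP perp push a b \<subseteq> \<Union>{c \<in> closedP perp. arrowP perp push b c \<subseteq> a}"
  proof
    fix \<pi> assume "\<pi> \<in> circP perp push a b"
    then have "arrowP perp push b (bclos perp {\<pi>}) \<subseteq> a"
      unfolding arrowP_subset_closed_iff[OF assms] circP_def by (rule CollectD)
    moreover have "\<pi> \<in> bclos perp {\<pi>}"
      using bclos_increasing[of "{\<pi>}" perp] by simp
    ultimately show "\<pi> \<in> \<Union>{c \<in> closedP perp. arrowP perp push b c \<subseteq> a}"
      using bclos_in_closedP by blast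
  qed
next
  show "\<Union>{c \<in> closedP perp. arrowP perp push b c \<subseteq> a} \<subseteq> circP perp push a b"
  proof
    fix \<pi> assume "\<pi> \<in> \<Union>{c \<in> closedP perp. arrowP perp push b c \<subseteq> a}"
    then obtain c where c: "c \<in> closedP perp" "arrowP perp push b c \<subseteq> a" "\<pi> \<in> c"
      by blast
    have "bclos perp {\<pi>} \<subseteq> c"
      using c by (intro bclos_least) simp_all
    with c(2) show "\<pi> \<in> circP perp push a b"
      unfolding arrowP_subset_closed_iff[OF assms] circP_def mem_Collect_eq
      by (meson subsetD)
  qed
qed

theorem mainTheorem8:
  fixes perp :: "'l \<Rightarrow> 'p \<Rightarrow> bool" and push :: "'l \<Rightarrow> 'p \<Rightarrow> 'p"
    and app :: "'l \<Rightarrow> 'l \<Rightarrow> 'l" and QP :: "'l set" and K S :: 'l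
    and a b :: "'p set"
  assumes "AKS perp push app QP K S"
    and "a \<in> closedP perp" and "b \<in> closedP perp"
  shows "bclos perp (circP perp push a b)
           = bclos perp (\<Union>{c \<in> closedP perp. arrowP perp push b c \<subseteq> a})"
  using circP_eq_Union_closedP[OF assms(2)] by simp

end
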